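(* Let $\mu$ be a finite Borel measure on $(-\pi,\pi)$ without singular continuous part, $b\in(-\pi,0)\cup(0,\pi)$, $I=[b,\pi]$ if $b>0$ and $I=[-\pi,b]$ if $b<0$, $\mu_H$ the polarization of $\mu$ with respect to $b$, and $\phi:\mathbb{R}\to\mathbb{R}$ convex and increasing. Then: (a) for $x\in I$ and $x'=2b-x$: $\phi(u_\mu(x))+\phi(u_\mu(x'))\le\phi(u_{\mu_H}(x))+\phi(u_{\mu_H}(x'))$; (b) if $b>0$ and $x\in[-\pi,b]$ (respectively $b<0$ and $x\in[b,\pi]$), then $\phi(u_\mu(x))\le\phi(u_{\mu_H}(x))$. If moreover $\phi$ is strictly increasing, then for $b>0$ (resp. $b<0$) the following are equivalent: (i) equality holds in (b) for some $x\in(-\pi,b]$ (resp. $x\in[b,\pi)$); (ii) equality holds in (b) for all $x\in(-\pi,b]$ (resp. $x\in[b,\pi)$); (iii) $\mu=\mu_H$.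
   Context: A "Borel measure on $(-\pi,\pi)$" means a positive, non-zero measure on the Borel sets of $(-\pi,\pi)$; $\lambda$ is Lebesgue measure. $G(x,y)=-\frac{xy}{2\pi}-\frac12|x-y|+\frac{\pi}{2}$ on $[-\pi,\pi]^2$ and $u_\mu(x)=\int G(x,y)\,d\mu(y)$. "Without singular continuous part" means $\mu=\nu+\delta$ with $d\nu=f\,d\lambda$, $0\le f\in L^1[-\pi,\pi]$, and $\delta=\sum_i a_i\delta_{x_i}$ purely discontinuous. Polarization of $f$ w.r.t. $b$: if $b\in(0,\pi)$, $f_H=f$ on $[-\pi,2b-\pi)$, $f_H(x)=\max\{f(x),f(2b-x)\}$ on $[2b-\pi,b]$, $f_H(x)=\min\{f(x),f(2b-x)\}$ on $[b,\pi]$; if $b\in(-\pi,0)$, $f_H(x)=\min\{f(x),f(2b-x)\}$ on $[-\pi,b]$, $f_H(x)=\max\{f(x),f(2b-x)\}$ on $[b,2b+\pi]$, $f_H=f$ on $(2b+\pi,\pi]$. $\delta_H$ is the purely discontinuous measure obtained by the same rule applied to the point-mass function $x\mapsto\delta(\{x\})$ on $(-\pi,\pi)$. Then $\mu_H=\nu_H+\delta_H$ with $d\nu_H=f_H\,d\lambda$. *)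

theory Defs
  imports "HOL-Analysis.Analysis"
begin

definition Gk :: "real \<Rightarrow> real \<Rightarrow> real" where
  "Gk x y = - (x * y) / (2 * pi) - \<bar>x - y\<bar> / 2 + pi / 2"

text \<open>The Borel measure on (-pi,pi) with absolutely continuous part f d lambda and
  purely discontinuous part sum_x a(x) delta_x (a = the point-mass function).\<close>
definition disc_ac_measure :: "(real \<Rightarrow> real) \<Rightarrow> (real \<Rightarrow> real) \<Rightarrow> real measure" where
  "disc_ac_measure f a =
     measure_of {-pi<..<pi} (sets (restrict_space borel {-pi<..<pi}))
       (\<lambda>A. (\<integral>\<^sup>+ x. ennreal (f x) * indicator A x \<partial>lebesgue)
            + (\<integral>\<^sup>+ x. ennreal (a x) * indicator A x \<partial>count_space UNIV))"

definition u_meas :: "real measure \<Rightarrow> real \<Rightarrow> real" where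
  "u_meas \<mu> x = (\<integral> y. Gk x y \<partial>\<mu>)"

definition polar :: "real \<Rightarrow> (real \<Rightarrow> real) \<Rightarrow> real \<Rightarrow> real" where
  "polar b g x =
    (if 0 < b then
       (if x < 2 * b - pi then g x
        else if x \<le> b then max (g x) (g (2 * b - x))
        else min (g x) (g (2 * b - x)))
     else
       (if x \<le> b then min (g x) (g (2 * b - x))
        else if x \<le> 2 * b + pi then max (g x) (g (2 * b - x))
        else g x))"

end

theory Submission
  imports Defs
begin

(*
  For x in [-pi, pi], u_mu(x) is the integral of G(x,.) against f d(lambda) plus the sum of
  a(y) G(x,y).  Polarization acts on the pairs {y, 2b - y}: of the two masses at y and at its
  mirror image, the larger is moved to the point on the same side of b as 0 (the near side).
  If two kernels k, kH satisfy k(y) <= kH(y), k(2b - y) <= kH(y) and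
  k(y) + k(2b - y) <= kH(y) + kH(2b - y) for y on the near side, then for masses m, m' >= 0
  one has m k(y) + m' k(2b - y) <= max m m' kH(y) + min m m' kH(2b - y); since Lebesgue and
  counting measure are invariant under y -> 2b - y, integrating over pairs gives
  int k d(mu) <= int kH d(mu_H).  Elementary inequalities for G show that
  (G(x,.), G(x,.)) is such a pair of kernels for x on the near side, while for x on the far
  side so are (G(x,.), G(x',.)) and (G(x,.) + G(x',.), G(x,.) + G(x',.)) with x' = 2b - x.
  Hence u_mu <= u_mu_H on the near side, u_mu(x) <= u_mu_H(x') and
  u_mu(x) + u_mu(x') <= u_mu_H(x) + u_mu_H(x'), and a convex increasing phi preserves this
  weak majorization.  For x in (-pi, pi) on the near side, G(x, 2b - y) < G(x, y) strictly
  unless y = b, so equality u_mu(x) = u_mu_H(x) forces every pair to be ordered already,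
  i.e. mu_H = mu.
*)

section \<open>The Green function\<close>

lemma Gk_uminus: "Gk (-x) (-y) = Gk x y"
  unfolding Gk_def by (simp add: abs_minus_commute)

lemma Gk_eq_max_min: "Gk x y = (pi - max x y) * (pi + min x y) / (2 * pi)"
  unfolding Gk_def by (simp add: max_def min_def field_simps abs_if)

lemma Gk_nonneg: "x \<in> {-pi..pi} \<Longrightarrow> y \<in> {-pi..pi} \<Longrightarrow> 0 \<le> Gk x y"
  unfolding Gk_eq_max_min by (auto intro!: divide_nonneg_pos)

lemma continuous_on_Gk: "continuous_on UNIV (Gk x)"
  unfolding Gk_def by (intro continuous_intros) auto

lemma Gk_reflect_reflect: "Gk (2*b - x) (2*b - y) = Gk x y + b * (x + y - 2*b) / pi"
  unfolding Gk_def by (simp add: abs_minus_commute field_simps)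

lemma Gk_reflect_swap: "Gk (2*b - x) y = Gk x (2*b - y) + b * (x - y) / pi"
proof -
  have "\<bar>2*b - x - y\<bar> = \<bar>x - (2*b - y)\<bar>" by (simp add: abs_minus_commute)
  then show ?thesis unfolding Gk_def by (simp add: field_simps)
qed

lemma Gk_reflect_less_pos:
  assumes "0 < b" "-pi < z" "z \<le> b" "2*b - pi \<le> y" "y < b"
  shows "Gk z (2*b - y) < Gk z y"
proof -
  have far: "Gk z (2*b - y) = (pi - (2*b - y)) * (pi + z) / (2*pi)"
    using assms by (simp add: Gk_eq_max_min max_def min_def)
  have "(pi - (2*b - y)) * (pi + z) < (if z \<le> y then (pi - y) * (pi + z) else (pi - z) * (pi + y))"
  proof (cases "z \<le> y")
    case True
    then show ?thesis using assms by (simp add: mult_strict_right_mono)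
  next
    case False
    have "z * (pi + y) < b * (pi + z)"
    proof (cases "z \<le> 0")
      case True
      then show ?thesis using assms by (smt (verit) mult_nonpos_nonneg mult_pos_pos)
    next
      case False
      then have "z * (pi + y) < z * (pi + z)" using \<open>\<not> z \<le> y\<close> by simp
      also have "\<dots> \<le> b * (pi + z)" using assms by (intro mult_right_mono) auto
      finally show ?thesis .
    qed
    moreover have "(pi - z) * (pi + y) - (pi - (2*b - y)) * (pi + z) = 2 * (b * (pi + z) - z * (pi + y))"
      by (simp add: algebra_simps)
    ultimately show ?thesis using False by simp
  qed
  then show ?thesis
    unfolding far by (cases "z \<le> y") (auto simp: Gk_eq_max_min intro!: divide_strict_right_mono)
qed

lemma Gk_le_reflect_pos:
  assumes "0 < b" "b \<le> x" "x \<le> pi" "-pi \<le> y" "y \<le> b"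
  shows "Gk x y \<le> Gk (2*b - x) y"
proof -
  have near: "Gk x y = (pi - x) * (pi + y) / (2*pi)"
    using assms by (simp add: Gk_eq_max_min)
  show ?thesis
  proof (cases "y \<le> 2*b - x")
    case True
    then have "Gk (2*b - x) y = (pi - (2*b - x)) * (pi + y) / (2*pi)"
      by (simp add: Gk_eq_max_min)
    then show ?thesis
      unfolding near using assms by (auto intro!: divide_right_mono mult_right_mono)
  next
    case False
    then have "Gk x (2*b - y) = (pi - x) * (pi + (2*b - y)) / (2*pi)"
      using assms by (simp add: Gk_eq_max_min)
    then have "Gk x y \<le> Gk x (2*b - y)"
      unfolding near using assms by (auto intro!: divide_right_mono mult_left_mono)
    also have "\<dots> \<le> Gk (2*b - x) y"
      using assms by (simp add: Gk_reflect_swap)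
    finally show ?thesis .
  qed
qed

lemma Gk_reflect_less:
  assumes b: "b \<in> {-pi<..<0} \<union> {0<..<pi}"
    and z: "z \<in> {-pi<..<pi}" "b * (z - b) \<le> 0" and y: "2*b - y \<in> {-pi..pi}" "b * (y - b) < 0"
  shows "Gk z (2*b - y) < Gk z y"
proof (cases "0 < b")
  case True
  then show ?thesis using b z y by (intro Gk_reflect_less_pos) (auto simp: mult_le_0_iff mult_less_0_iff)
next
  case False
  then have "Gk (-z) (2*(-b) - (-y)) < Gk (-z) (-y)"
    using b z y by (intro Gk_reflect_less_pos) (auto simp: mult_le_0_iff mult_less_0_iff)
  moreover have "Gk (-z) (2*(-b) - (-y)) = Gk z (2*b - y)"
    using Gk_uminus[of z "2*b - y"] by simp
  ultimately show ?thesis by (simp add: Gk_uminus)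
qed

lemma Gk_reflect_le:
  assumes b: "b \<in> {-pi<..<0} \<union> {0<..<pi}"
    and z: "z \<in> {-pi..pi}" "b * (z - b) \<le> 0"
    and y: "y \<in> {-pi..pi}" "2*b - y \<in> {-pi..pi}" "b * (y - b) \<le> 0"
  shows "Gk z (2*b - y) \<le> Gk z y"
proof -
  have "b \<noteq> 0" using b by auto
  then consider "z = -pi \<or> z = pi" | "y = b" | "z \<in> {-pi<..<pi}" "b * (y - b) < 0"
    using z y by (fastforce simp: less_le)
  then show ?thesis
  proof cases
    case 1
    then show ?thesis using y by (auto simp: Gk_eq_max_min)
  next
    case 3
    then show ?thesis using Gk_reflect_less[OF b 3(1) z(2) y(2)] by simp
  qed simp
qed

lemma Gk_le_reflect:
  assumes b: "b \<in> {-pi<..<0} \<union> {0<..<pi}"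
    and x: "x \<in> {-pi..pi}" "0 \<le> b * (x - b)" and y: "y \<in> {-pi..pi}" "b * (y - b) \<le> 0"
  shows "Gk x y \<le> Gk (2*b - x) y"
proof (cases "0 < b")
  case True
  then show ?thesis using b x y by (intro Gk_le_reflect_pos) (auto simp: mult_le_0_iff zero_le_mult_iff)
next
  case False
  then have "Gk (-x) (-y) \<le> Gk (2*(-b) - (-x)) (-y)"
    using b x y by (intro Gk_le_reflect_pos) (auto simp: mult_le_0_iff zero_le_mult_iff)
  moreover have "Gk (2*(-b) - (-x)) (-y) = Gk (2*b - x) y"
    using Gk_uminus[of "2*b - x" y] by simp
  ultimately show ?thesis by (simp add: Gk_uminus)
qed

section \<open>Polarization of a single pair of points\<close>

text \<open>The condition \<^prop>\<open>b * (y - b) \<le> 0\<close> says that \<open>y\<close> lies on the same side of \<open>b\<close> as \<open>0\<close>;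
  there polarization keeps the larger of the two values at \<open>y\<close> and \<open>2 * b - y\<close>.\<close>

lemma
  assumes b: "b \<in> {-pi<..<0} \<union> {0<..<pi}"
    and g: "\<And>x. 0 \<le> g x" "\<And>x. x \<notin> {-pi..pi} \<Longrightarrow> g x = 0"
  shows polar_eq_max: "b * (y - b) \<le> 0 \<Longrightarrow> polar b g y = max (g y) (g (2*b - y))"
    and polar_eq_min: "0 \<le> b * (y - b) \<Longrightarrow> polar b g y = min (g y) (g (2*b - y))"
  using b g[of y] g[of "2*b - y"] unfolding polar_def
  by (auto simp: mult_le_0_iff zero_le_mult_iff max_def min_def)

lemma polar_nonneg: "(\<And>x. 0 \<le> g x) \<Longrightarrow> 0 \<le> polar b g y"
  unfolding polar_def by (auto simp: le_max_iff_disj)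

lemma polar_le_add: "(\<And>x. 0 \<le> g x) \<Longrightarrow> polar b g y \<le> g y + g (2*b - y)"
  unfolding polar_def by (auto simp: add_increasing add_increasing2 min_le_iff_disj)

lemma reflect_notin:
  assumes "b \<in> {-pi<..<0} \<union> {0<..<pi}" "b * (y - b) \<le> 0" "y \<notin> {-pi..pi}"
  shows "2*b - y \<notin> {-pi..pi}"
  using assms by (auto simp: mult_le_0_iff)

lemma polar_eq_0:
  assumes b: "b \<in> {-pi<..<0} \<union> {0<..<pi}" and T: "{-pi<..<pi} \<subseteq> T" "T \<subseteq> {-pi..pi}"
    and g: "\<And>x. 0 \<le> g x" "\<And>x. x \<notin> T \<Longrightarrow> g x = 0" and y: "y \<notin> T"
  shows "polar b g y = 0"
proof -
  have gS: "\<And>x. x \<notin> {-pi..pi} \<Longrightarrow> g x = 0" using g(2) T(2) by blast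
  show ?thesis
  proof (cases "b * (y - b) \<le> 0")
    case True
    have "polar b g y = max (g y) (g (2*b - y))" using b g(1) gS True by (rule polar_eq_max)
    moreover have "2*b - y \<notin> T" using True b T y by (auto simp: mult_le_0_iff subset_eq)
    ultimately show ?thesis using g(2) y by simp
  next
    case False
    then have "0 \<le> b * (y - b)" by simp
    with b g(1) gS have "polar b g y = min (g y) (g (2*b - y))" by (rule polar_eq_min)
    then show ?thesis using g y by (simp add: min_def)
  qed
qed

lemma polar_indicator:
  assumes b: "b \<in> {-pi<..<0} \<union> {0<..<pi}" and g: "\<And>x. 0 \<le> g x"
  shows "polar b (\<lambda>x. indicator {-pi..pi} x * g x) = (\<lambda>x. indicator {-pi..pi} x * polar b g x)"
proof
  fix y
  show "polar b (\<lambda>x. indicator {-pi..pi} x * g x) y = indicator {-pi..pi} y * polar b g y"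
  proof (cases "y \<in> {-pi..pi}")
    case False
    have "polar b (\<lambda>x. indicator {-pi..pi} x * g x) y = 0"
      by (rule polar_eq_0[OF b, of "{-pi..pi}"]) (use False g in auto)
    then show ?thesis using False by simp
  next
    case True
    then show ?thesis using b unfolding polar_def by (auto simp: indicator_def)
  qed
qed

lemma max_min_mult_le:
  fixes m m' k1 k2 K1 K2 :: real
  assumes "0 \<le> m" "0 \<le> m'" "k1 \<le> K1" "k2 \<le> K1" "k1 + k2 \<le> K1 + K2"
  shows "m * k1 + m' * k2 \<le> max m m' * K1 + min m m' * K2"
proof (cases "m' \<le> m")
  case True
  then have "max m m' = m" "min m m' = m'" by auto
  moreover have "0 \<le> (m - m') * (K1 - k1) + m' * (K1 + K2 - k1 - k2)" using True assms by simp
  ultimately show ?thesis by (simp add: algebra_simps)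
next
  case False
  then have "max m m' = m'" "min m m' = m" by auto
  moreover have "0 \<le> (m' - m) * (K1 - k2) + m * (K1 + K2 - k1 - k2)" using False assms by simp
  ultimately show ?thesis by (simp add: algebra_simps)
qed

lemma le_of_max_min_mult_eq:
  fixes m m' k1 k2 :: real
  assumes "k2 < k1" "m * k1 + m' * k2 = max m m' * k1 + min m m' * k2"
  shows "m' \<le> m"
proof (rule ccontr)
  assume "\<not> m' \<le> m"
  then have "0 < (m' - m) * (k1 - k2)" using assms by simp
  then show False using assms \<open>\<not> m' \<le> m\<close> by (simp add: max_def min_def algebra_simps)
qed

lemma polar_pair_eq_max_min:
  assumes b: "b \<in> {-pi<..<0} \<union> {0<..<pi}"
    and h: "\<And>x. 0 \<le> h x" "\<And>x. x \<notin> {-pi..pi} \<Longrightarrow> h x = 0" and y: "b * (y - b) \<le> 0"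
  shows "polar b h y = max (h y) (h (2*b - y))" "polar b h (2*b - y) = min (h y) (h (2*b - y))"
proof -
  have "0 \<le> b * ((2*b - y) - b)" using y by (simp add: algebra_simps)
  with b h have "polar b h (2*b - y) = min (h (2*b - y)) (h (2*b - (2*b - y)))"
    by (rule polar_eq_min)
  then show "polar b h (2*b - y) = min (h y) (h (2*b - y))" by (simp add: min.commute)
qed (use b h y in \<open>rule polar_eq_max\<close>)

text \<open>For each pair \<open>{y, 2 * b - y}\<close> with \<open>y\<close> on the near side, these are the hypotheses of
  \<open>max_min_mult_le\<close>; if \<open>2 * b - y\<close> lies outside \<open>[-pi, pi]\<close>, no mass sits there and only
  \<^prop>\<open>k y \<le> kH y\<close> is needed.\<close>

definition polar_dominated :: "real \<Rightarrow> (real \<Rightarrow> real) \<Rightarrow> (real \<Rightarrow> real) \<Rightarrow> bool" where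
  "polar_dominated b k kH \<longleftrightarrow>
     (\<forall>y \<in> {-pi..pi}. b * (y - b) \<le> 0 \<longrightarrow> k y \<le> kH y \<and>
        (2*b - y \<in> {-pi..pi} \<longrightarrow> k (2*b - y) \<le> kH y \<and> k y + k (2*b - y) \<le> kH y + kH (2*b - y)))"

lemma polar_dominated_self:
  assumes "\<And>y. y \<in> {-pi..pi} \<Longrightarrow> 2*b - y \<in> {-pi..pi} \<Longrightarrow> b * (y - b) \<le> 0 \<Longrightarrow> k (2*b - y) \<le> k y"
  shows "polar_dominated b k k"
  using assms unfolding polar_dominated_def by auto

lemma polar_dominated_self_strict:
  assumes b: "b \<in> {-pi<..<0} \<union> {0<..<pi}"
    and k: "\<And>y. y \<in> {-pi..pi} \<Longrightarrow> 2*b - y \<in> {-pi..pi} \<Longrightarrow> b * (y - b) < 0 \<Longrightarrow> k (2*b - y) < k y"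
  shows "polar_dominated b k k"
proof (rule polar_dominated_self)
  fix y assume y: "y \<in> {-pi..pi}" "2*b - y \<in> {-pi..pi}" "b * (y - b) \<le> 0"
  show "k (2*b - y) \<le> k y"
  proof (cases "y = b")
    case False
    with y b have "b * (y - b) < 0" by (auto simp: less_le)
    with y k show ?thesis by fastforce
  qed simp
qed

lemma polar_pair_le:
  assumes b: "b \<in> {-pi<..<0} \<union> {0<..<pi}"
    and h: "\<And>x. 0 \<le> h x" "\<And>x. x \<notin> {-pi..pi} \<Longrightarrow> h x = 0"
    and k: "polar_dominated b k kH"
  shows "h y * k y + h (2*b - y) * k (2*b - y)
    \<le> polar b h y * kH y + polar b h (2*b - y) * kH (2*b - y)"
proof -
  have near: "h y * k y + h (2*b - y) * k (2*b - y)
      \<le> polar b h y * kH y + polar b h (2*b - y) * kH (2*b - y)" if y: "b * (y - b) \<le> 0" for y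
  proof -
    have polar_y: "polar b h y = max (h y) (h (2*b - y))"
        "polar b h (2*b - y) = min (h y) (h (2*b - y))"
      using b h y by (fact polar_pair_eq_max_min)+
    consider "y \<notin> {-pi..pi}" | "y \<in> {-pi..pi}" "2*b - y \<notin> {-pi..pi}"
      | "y \<in> {-pi..pi}" "2*b - y \<in> {-pi..pi}" by blast
    then show ?thesis
    proof cases
      case 1
      then show ?thesis using h(2) reflect_notin[OF b y 1] by (simp add: polar_y)
    next
      case 2
      then have "h y * k y \<le> h y * kH y"
        using k y h(1)[of y] unfolding polar_dominated_def by (auto intro: mult_left_mono)
      then show ?thesis using 2 h by (simp add: polar_y)
    next
      case 3
      then show ?thesis using k y h(1) unfolding polar_y polar_dominated_def
        by (intro max_min_mult_le) auto
    qed
  qed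
  show ?thesis
  proof (cases "b * (y - b) \<le> 0")
    case False
    then have "b * ((2*b - y) - b) \<le> 0" by (simp add: algebra_simps)
    then show ?thesis using near[of "2*b - y"] by simp
  qed (rule near)
qed

lemma polar_eq_of_pair_eq:
  assumes b: "b \<in> {-pi<..<0} \<union> {0<..<pi}"
    and h: "\<And>x. 0 \<le> h x" "\<And>x. x \<notin> {-pi..pi} \<Longrightarrow> h x = 0"
    and k: "\<And>y. y \<in> {-pi..pi} \<Longrightarrow> 2*b - y \<in> {-pi..pi} \<Longrightarrow> b * (y - b) < 0 \<Longrightarrow> k (2*b - y) < k y"
    and eq: "h y * k y + h (2*b - y) * k (2*b - y) = polar b h y * k y + polar b h (2*b - y) * k (2*b - y)"
  shows "polar b h y = h y"
proof -
  have near: "h (2*b - y) \<le> h y" if y: "b * (y - b) \<le> 0"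
    and eq: "h y * k y + h (2*b - y) * k (2*b - y) = polar b h y * k y + polar b h (2*b - y) * k (2*b - y)"
  for y
  proof -
    have polar_y: "polar b h y = max (h y) (h (2*b - y))"
        "polar b h (2*b - y) = min (h y) (h (2*b - y))"
      using b h y by (fact polar_pair_eq_max_min)+
    have "b \<noteq> 0" using b by auto
    then consider "y = b" | "2*b - y \<notin> {-pi..pi}" | "y \<in> {-pi..pi}" "2*b - y \<in> {-pi..pi}" "b * (y - b) < 0"
      using y reflect_notin[OF b y] by (fastforce simp: less_le)
    then show ?thesis
    proof cases
      case 3
      show ?thesis
      proof (rule le_of_max_min_mult_eq[OF k[OF 3]])
        show "h y * k y + h (2*b - y) * k (2*b - y) =
            max (h y) (h (2*b - y)) * k y + min (h y) (h (2*b - y)) * k (2*b - y)"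
          using eq by (simp add: polar_y)
      qed
    qed (use h in auto)
  qed
  show ?thesis
  proof (cases "b * (y - b) \<le> 0")
    case True
    have "polar b h y = max (h y) (h (2*b - y))" using b h True by (rule polar_pair_eq_max_min)
    then show ?thesis using near[OF True eq] by simp
  next
    case False
    then have y': "b * ((2*b - y) - b) \<le> 0" by (simp add: algebra_simps)
    have "h y \<le> h (2*b - y)" using near[OF y'] eq by (simp add: add.commute)
    moreover have "polar b h (2*b - (2*b - y)) = min (h (2*b - y)) (h (2*b - (2*b - y)))"
      using b h y' by (rule polar_pair_eq_max_min)
    ultimately show ?thesis by simp
  qed
qed

lemma polar_dominated_Gk_near:
  assumes "b \<in> {-pi<..<0} \<union> {0<..<pi}" "z \<in> {-pi..pi}" "b * (z - b) \<le> 0"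
  shows "polar_dominated b (Gk z) (Gk z)"
  using Gk_reflect_le[OF assms] by (intro polar_dominated_self)

lemma polar_dominated_Gk_far:
  assumes b: "b \<in> {-pi<..<0} \<union> {0<..<pi}" and x: "x \<in> {-pi..pi}" "0 \<le> b * (x - b)"
  shows "polar_dominated b (Gk x) (Gk (2*b - x))"
  unfolding polar_dominated_def
proof (intro ballI impI conjI)
  fix y assume y: "y \<in> {-pi..pi}" "b * (y - b) \<le> 0"
  show "Gk x y \<le> Gk (2*b - x) y" using Gk_le_reflect[OF b x y] .
  have "0 \<le> b * (x - y)" using x y by (simp add: algebra_simps)
  then show "Gk x (2*b - y) \<le> Gk (2*b - x) y" by (simp add: Gk_reflect_swap)
  have "b * (x - y) / pi + b * (x + y - 2*b) / pi = 2 * (b * (x - b)) / pi"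
    by (simp add: field_simps)
  also have "\<dots> \<ge> 0" using x(2) by simp
  finally show "Gk x y + Gk x (2*b - y) \<le> Gk (2*b - x) y + Gk (2*b - x) (2*b - y)"
    using Gk_reflect_swap[of b x y] Gk_reflect_reflect[of b x y] by linarith
qed

lemma polar_dominated_Gk_sum_far:
  assumes x: "0 \<le> b * (x - b)"
  shows "polar_dominated b (\<lambda>y. Gk x y + Gk (2*b - x) y) (\<lambda>y. Gk x y + Gk (2*b - x) y)"
proof (rule polar_dominated_self)
  fix y assume y: "b * (y - b) \<le> 0"
  have "b * (x + y - 2*b) / pi - b * (x - y) / pi = 2 * (b * (y - b)) / pi"
    by (simp add: field_simps)
  also have "\<dots> \<le> 0" using y by (simp add: divide_nonpos_pos)
  finally show "Gk x (2*b - y) + Gk (2*b - x) (2*b - y) \<le> Gk x y + Gk (2*b - x) y"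
    using Gk_reflect_swap[of b x y] Gk_reflect_reflect[of b x y] by linarith
qed

section \<open>Integrals against reflection-invariant measures\<close>

lemma integrable_mult_continuous:
  fixes h k :: "real \<Rightarrow> real"
  assumes h: "integrable M h" "\<And>y. y \<notin> {-pi..pi} \<Longrightarrow> h y = 0"
    and k: "continuous_on {-pi..pi} k" "k \<in> borel_measurable M"
  shows "integrable M (\<lambda>y. h y * k y)"
proof -
  have "compact (k ` {-pi..pi})"
    using k(1) by (intro compact_continuous_image) auto
  then obtain C where C: "\<And>y. y \<in> {-pi..pi} \<Longrightarrow> \<bar>k y\<bar> \<le> C"
    by (meson compact_imp_bounded bounded_real image_eqI)
  show ?thesis
  proof (rule Bochner_Integration.integrable_bound[where f="\<lambda>y. C * h y"])
    show "integrable M (\<lambda>y. C * h y)" using h by simp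
    show "(\<lambda>y. h y * k y) \<in> borel_measurable M"
      using borel_measurable_integrable[OF h(1)] k(2) by (rule borel_measurable_times)
    show "AE y in M. norm (h y * k y) \<le> norm (C * h y)"
    proof (rule AE_I2)
      fix y show "norm (h y * k y) \<le> norm (C * h y)"
      proof (cases "y \<in> {-pi..pi}")
        case True
        have "\<bar>h y\<bar> * \<bar>k y\<bar> \<le> \<bar>h y\<bar> * \<bar>C\<bar>" using C[OF True] by (intro mult_left_mono) auto
        then show ?thesis by (simp add: abs_mult mult.commute)
      qed (simp add: h(2))
    qed
  qed
qed

locale reflection_invariant =
  fixes M :: "real measure" and b :: real
  assumes space_eq: "space M = UNIV"
    and sets_borel: "sets borel \<subseteq> sets M"
    and integrable_reflect: "\<And>g :: real \<Rightarrow> real. integrable M g \<Longrightarrow> integrable M (\<lambda>y. g (2*b - y))"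
    and integral_reflect:
      "\<And>g :: real \<Rightarrow> real. integrable M g \<Longrightarrow> (\<integral>y. g (2*b - y) \<partial>M) = (\<integral>y. g y \<partial>M)"
begin

lemma borel_measurable_continuous: "continuous_on UNIV g \<Longrightarrow> g \<in> borel_measurable M"
  using measurable_mono[of borel borel borel M] sets_borel space_eq borel_measurable_continuous_onI
  by auto

lemma integral_pair_sum:
  fixes g :: "real \<Rightarrow> real"
  shows "integrable M g \<Longrightarrow> (\<integral>y. g y + g (2*b - y) \<partial>M) = 2 * (\<integral>y. g y \<partial>M)"
  by (simp add: integrable_reflect integral_reflect)

lemma integral_mono_pairwise:
  fixes g gH :: "real \<Rightarrow> real"
  assumes g: "integrable M g" "integrable M gH"
    and le: "\<And>y. g y + g (2*b - y) \<le> gH y + gH (2*b - y)"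
  shows "(\<integral>y. g y \<partial>M) \<le> (\<integral>y. gH y \<partial>M)"
proof -
  have "0 \<le> (\<integral>y. (gH y - g y) + (gH (2*b - y) - g (2*b - y)) \<partial>M)"
    using le by (intro integral_nonneg_AE AE_I2) (simp add: algebra_simps)
  also have "\<dots> = 2 * (\<integral>y. gH y - g y \<partial>M)"
    using g by (intro integral_pair_sum) auto
  finally show ?thesis using g by simp
qed

lemma AE_pairwise_eq_of_integral_eq:
  fixes g gH :: "real \<Rightarrow> real"
  assumes g: "integrable M g" "integrable M gH"
    and le: "\<And>y. g y + g (2*b - y) \<le> gH y + gH (2*b - y)"
    and eq: "(\<integral>y. g y \<partial>M) = (\<integral>y. gH y \<partial>M)"
  shows "AE y in M. g y + g (2*b - y) = gH y + gH (2*b - y)"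
proof -
  define p where "p y = (gH y - g y) + (gH (2*b - y) - g (2*b - y))" for y
  have p_int: "integrable M p"
    unfolding p_def using g
    by (intro Bochner_Integration.integrable_add Bochner_Integration.integrable_diff integrable_reflect)
  have "(\<integral>y. p y \<partial>M) = 2 * (\<integral>y. gH y - g y \<partial>M)"
    unfolding p_def using g by (intro integral_pair_sum) auto
  also have "\<dots> = 0" using g eq by simp
  finally have "(\<integral>y. p y \<partial>M) = 0" .
  moreover have "AE y in M. 0 \<le> p y"
    using le by (intro AE_I2) (simp add: p_def algebra_simps)
  ultimately have "AE y in M. p y = 0"
    using integral_nonneg_eq_0_iff_AE[OF p_int] by simp
  then show ?thesis by eventually_elim (simp add: p_def algebra_simps)
qed

lemma integrable_polar:
  assumes b: "b \<in> {-pi<..<0} \<union> {0<..<pi}"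
    and h: "integrable M h" "\<And>x. 0 \<le> h x" "\<And>x. x \<notin> {-pi..pi} \<Longrightarrow> h x = 0"
  shows "integrable M (polar b h)"
proof (rule Bochner_Integration.integrable_bound[where f="\<lambda>y. h y + h (2*b - y)"])
  show "integrable M (\<lambda>y. h y + h (2*b - y))"
    using h(1) by (intro Bochner_Integration.integrable_add integrable_reflect)
  have eq: "polar b h = (\<lambda>y. if b * (y - b) \<le> 0 then max (h y) (h (2*b - y)) else min (h y) (h (2*b - y)))"
  proof
    fix y
    show "polar b h y = (if b * (y - b) \<le> 0 then max (h y) (h (2*b - y)) else min (h y) (h (2*b - y)))"
    proof (cases "b * (y - b) \<le> 0")
      case True
      have "polar b h y = max (h y) (h (2*b - y))" using b h(2,3) True by (rule polar_eq_max)
      then show ?thesis using True by simp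
    next
      case False
      then have "0 \<le> b * (y - b)" by simp
      with b h(2,3) have "polar b h y = min (h y) (h (2*b - y))" by (rule polar_eq_min)
      then show ?thesis using False by simp
    qed
  qed
  have "{y \<in> space M. b * (y - b) \<le> 0} \<in> sets M"
    using sets_borel space_eq by (auto intro!: subsetD[OF sets_borel])
  then show "polar b h \<in> borel_measurable M"
    unfolding eq using borel_measurable_integrable[OF h(1)] borel_measurable_integrable[OF integrable_reflect[OF h(1)]]
    by (intro measurable_If borel_measurable_max borel_measurable_min)
  show "AE y in M. norm (polar b h y) \<le> norm (h y + h (2*b - y))"
    using polar_le_add[of h b] polar_nonneg[of h b] h(2) by (intro AE_I2) simp
qed

lemma integrable_polar_mult_continuous:
  assumes b: "b \<in> {-pi<..<0} \<union> {0<..<pi}"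
    and h: "integrable M h" "\<And>x. 0 \<le> h x" "\<And>x. x \<notin> {-pi..pi} \<Longrightarrow> h x = 0"
    and k: "continuous_on UNIV k"
  shows "integrable M (\<lambda>y. polar b h y * k y)"
proof -
  have "polar b h y = 0" if "y \<notin> {-pi..pi}" for y
    by (rule polar_eq_0[of b "{-pi..pi}"]) (use b h(2,3) that in auto)
  then show ?thesis using integrable_polar[OF b h] k
    by (intro integrable_mult_continuous borel_measurable_continuous continuous_on_subset[OF k]) auto
qed

lemma integral_mult_le_polar:
  assumes b: "b \<in> {-pi<..<0} \<union> {0<..<pi}"
    and h: "integrable M h" "\<And>x. 0 \<le> h x" "\<And>x. x \<notin> {-pi..pi} \<Longrightarrow> h x = 0"
    and k: "continuous_on UNIV k" "continuous_on UNIV kH" "polar_dominated b k kH"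
  shows "(\<integral>y. h y * k y \<partial>M) \<le> (\<integral>y. polar b h y * kH y \<partial>M)"
proof (rule integral_mono_pairwise)
  show "integrable M (\<lambda>y. polar b h y * kH y)"
    using b h k(2) by (rule integrable_polar_mult_continuous)
  show "integrable M (\<lambda>y. h y * k y)"
    using h(1,3) k(1) by (intro integrable_mult_continuous borel_measurable_continuous continuous_on_subset[OF k(1)]) auto
  show "h y * k y + h (2*b - y) * k (2*b - y) \<le> polar b h y * kH y + polar b h (2*b - y) * kH (2*b - y)"
    for y using b h(2,3) k(3) by (rule polar_pair_le)
qed

lemma AE_polar_eq_of_integral_eq:
  assumes b: "b \<in> {-pi<..<0} \<union> {0<..<pi}"
    and h: "integrable M h" "\<And>x. 0 \<le> h x" "\<And>x. x \<notin> {-pi..pi} \<Longrightarrow> h x = 0"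
    and k: "continuous_on UNIV k"
      "\<And>y. y \<in> {-pi..pi} \<Longrightarrow> 2*b - y \<in> {-pi..pi} \<Longrightarrow> b * (y - b) < 0 \<Longrightarrow> k (2*b - y) < k y"
    and eq: "(\<integral>y. h y * k y \<partial>M) = (\<integral>y. polar b h y * k y \<partial>M)"
  shows "AE y in M. polar b h y = h y"
proof -
  have "polar_dominated b k k" using b k(2) by (rule polar_dominated_self_strict)
  then have "AE y in M. h y * k y + h (2*b - y) * k (2*b - y)
      = polar b h y * k y + polar b h (2*b - y) * k (2*b - y)"
    using b h k(1) eq
    by (intro AE_pairwise_eq_of_integral_eq integrable_mult_continuous borel_measurable_continuous
        integrable_polar_mult_continuous polar_pair_le continuous_on_subset[OF k(1)]) auto
  then show ?thesis
    by eventually_elim (use b h(2,3) k(2) in \<open>rule polar_eq_of_pair_eq\<close>)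
qed

end

lemma reflection_invariant_lebesgue: "reflection_invariant lebesgue b"
proof
  show "sets borel \<subseteq> sets lebesgue"
    by (metis sets_completionI_sets sets_lborel subsetI)
  fix g :: "real \<Rightarrow> real" assume g: "integrable lebesgue g"
  show "integrable lebesgue (\<lambda>y. g (2*b - y))"
    using lebesgue_integrable_real_affine[OF g, of "-1" "2*b"] by simp
  show "(\<integral>y. g (2*b - y) \<partial>lebesgue) = (\<integral>y. g y \<partial>lebesgue)"
    using lebesgue_integral_real_affine[of "-1" g "2*b"] by simp
qed simp

lemma reflection_invariant_count_space: "reflection_invariant (count_space UNIV) b"
proof
  have bij: "bij_betw (\<lambda>y. 2*b - y) UNIV UNIV"
    by (rule bij_betw_byWitness[where f'="\<lambda>y. 2*b - y"]) auto
  fix g :: "real \<Rightarrow> real" assume g: "integrable (count_space UNIV) g"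
  show "integrable (count_space UNIV) (\<lambda>y. g (2*b - y))"
    using g integrable_distr_eq[of "\<lambda>y. 2*b - y" "count_space UNIV" "count_space UNIV" g]
    by (simp add: distr_bij_count_space[OF bij])
  show "(\<integral>y. g (2*b - y) \<partial>count_space UNIV) = (\<integral>y. g y \<partial>count_space UNIV)"
    using integral_distr[of "\<lambda>y. 2*b - y" "count_space UNIV" "count_space UNIV" g]
    by (simp add: distr_bij_count_space[OF bij])
qed auto

section \<open>The measure with density and point masses\<close>

lemma space_disc_ac_measure [simp]: "space (disc_ac_measure f a) = {-pi<..<pi}"
  unfolding disc_ac_measure_def by (simp add: space_measure_of_conv)

lemma sets_disc_ac_measure: "sets (disc_ac_measure f a) = sets (restrict_space borel {-pi<..<pi})"
proof -
  have "sets (restrict_space borel {-pi<..<pi}) \<subseteq> Pow {-pi<..<pi}"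
    using sets.space_closed[of "restrict_space borel {-pi<..<pi}"] by simp
  then show ?thesis
    unfolding disc_ac_measure_def
    using sets.sigma_sets_eq[of "restrict_space borel {-pi<..<pi}"] by simp
qed

lemma emeasure_disc_ac_measure:
  assumes f: "f \<in> borel_measurable lebesgue" and A: "A \<in> sets (restrict_space borel {-pi<..<pi})"
  shows "emeasure (disc_ac_measure f a) A =
     (\<integral>\<^sup>+x. ennreal (f x) * indicator A x \<partial>lebesgue)
       + (\<integral>\<^sup>+x. ennreal (a x) * indicator A x \<partial>count_space UNIV)"
  unfolding disc_ac_measure_def
proof (rule emeasure_measure_of_sigma[OF _ _ _ A])
  show "sigma_algebra {-pi<..<pi} (sets (restrict_space borel {-pi<..<pi}))"
    using sets.sigma_algebra_axioms[of "restrict_space borel {-pi<..<pi}"] by simp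
  show "positive (sets (restrict_space borel {-pi<..<pi}))
     (\<lambda>A. (\<integral>\<^sup>+x. ennreal (f x) * indicator A x \<partial>lebesgue)
          + (\<integral>\<^sup>+x. ennreal (a x) * indicator A x \<partial>count_space UNIV))"
    by (simp add: positive_def)
  show "countably_additive (sets (restrict_space borel {-pi<..<pi}))
     (\<lambda>A. (\<integral>\<^sup>+x. ennreal (f x) * indicator A x \<partial>lebesgue)
          + (\<integral>\<^sup>+x. ennreal (a x) * indicator A x \<partial>count_space UNIV))"
    unfolding countably_additive_def
  proof (intro allI impI)
    fix B :: "nat \<Rightarrow> real set"
    assume B: "range B \<subseteq> sets (restrict_space borel {-pi<..<pi})" "disjoint_family B"
    have "B i \<in> sets (restrict_space borel {-pi<..<pi})" for i
      using B(1) by auto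
    then have "B i \<in> sets lebesgue" for i
      by (simp add: sets_restrict_space_iff)
    then have "(\<Sum>i. \<integral>\<^sup>+x. ennreal (f x) * indicator (B i) x \<partial>lebesgue)
        = (\<integral>\<^sup>+x. ennreal (f x) * indicator (\<Union> (range B)) x \<partial>lebesgue)"
      using f by (subst nn_integral_suminf[symmetric])
        (auto simp: suminf_indicator[OF B(2)])
    moreover have "(\<Sum>i. \<integral>\<^sup>+x. ennreal (a x) * indicator (B i) x \<partial>count_space UNIV)
        = (\<integral>\<^sup>+x. ennreal (a x) * indicator (\<Union> (range B)) x \<partial>count_space UNIV)"
      by (subst nn_integral_suminf[symmetric]) (auto simp: suminf_indicator[OF B(2)])
    ultimately show "(\<Sum>i. (\<integral>\<^sup>+x. ennreal (f x) * indicator (B i) x \<partial>lebesgue)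
          + (\<integral>\<^sup>+x. ennreal (a x) * indicator (B i) x \<partial>count_space UNIV))
        = (\<integral>\<^sup>+x. ennreal (f x) * indicator (\<Union> (range B)) x \<partial>lebesgue)
          + (\<integral>\<^sup>+x. ennreal (a x) * indicator (\<Union> (range B)) x \<partial>count_space UNIV)"
      by (subst suminf_add[symmetric]) auto
  qed
qed

lemma borel_measurable_lebesgue_restrict:
  assumes "g \<in> borel_measurable (disc_ac_measure f a)"
  shows "(\<lambda>x. g x * indicator {-pi<..<pi} x :: ennreal) \<in> borel_measurable lebesgue"
proof -
  have "g \<in> borel_measurable (restrict_space borel {-pi<..<pi})"
    using assms measurable_cong_sets[OF sets_disc_ac_measure refl] by blast
  then have "(\<lambda>x. if x \<in> {-pi<..<pi} then g x else 0) \<in> borel_measurable borel"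
    by (subst (asm) measurable_restrict_space_iff) auto
  moreover have "(\<lambda>x. if x \<in> {-pi<..<pi} then g x else 0) = (\<lambda>x. g x * indicator {-pi<..<pi} x)"
    by (auto simp: indicator_def)
  ultimately show ?thesis using measurable_completion measurable_lborel2 by metis
qed

lemma nn_integral_disc_ac_measure:
  assumes f: "f \<in> borel_measurable lebesgue" and a: "\<And>x. x \<notin> {-pi<..<pi} \<Longrightarrow> a x = 0"
    and g: "g \<in> borel_measurable (disc_ac_measure f a)"
  shows "(\<integral>\<^sup>+x. g x \<partial>disc_ac_measure f a) =
     (\<integral>\<^sup>+x. ennreal (f x) * (g x * indicator {-pi<..<pi} x) \<partial>lebesgue)
       + (\<integral>\<^sup>+x. ennreal (a x) * g x \<partial>count_space UNIV)"
  using g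
proof (induction rule: borel_measurable_induct)
  case (cong u v)
  have "(\<integral>\<^sup>+x. u x \<partial>disc_ac_measure f a) = (\<integral>\<^sup>+x. v x \<partial>disc_ac_measure f a)"
    using cong by (intro nn_integral_cong) auto
  moreover have "(\<integral>\<^sup>+x. ennreal (f x) * (u x * indicator {-pi<..<pi} x) \<partial>lebesgue) =
      (\<integral>\<^sup>+x. ennreal (f x) * (v x * indicator {-pi<..<pi} x) \<partial>lebesgue)"
    using cong by (intro nn_integral_cong) (auto simp: indicator_def)
  moreover have "(\<integral>\<^sup>+x. ennreal (a x) * u x \<partial>count_space UNIV)
      = (\<integral>\<^sup>+x. ennreal (a x) * v x \<partial>count_space UNIV)"
    using cong a by (intro nn_integral_cong) (metis mult_zero_left ennreal_0 space_disc_ac_measure)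
  ultimately show ?case using cong by simp
next
  case (set A)
  then have A: "A \<in> sets (restrict_space borel {-pi<..<pi})" by (simp add: sets_disc_ac_measure)
  then have "A \<subseteq> {-pi<..<pi}" by (auto simp: sets_restrict_space_iff)
  then have "indicator A x * indicator {-pi<..<pi} x = (indicator A x :: ennreal)" for x
    by (auto simp: indicator_def)
  then show ?case using emeasure_disc_ac_measure[OF f A] set by simp
next
  case (mult u c)
  have m: "(\<lambda>x. ennreal (f x) * (u x * indicator {-pi<..<pi} x)) \<in> borel_measurable lebesgue"
    using f borel_measurable_lebesgue_restrict[OF mult(2)] by measurable
  have "(\<integral>\<^sup>+x. c * u x \<partial>disc_ac_measure f a) = c * (\<integral>\<^sup>+x. u x \<partial>disc_ac_measure f a)"
    using mult(2) by (rule nn_integral_cmult)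
  moreover have "(\<integral>\<^sup>+x. ennreal (f x) * (c * u x * indicator {-pi<..<pi} x) \<partial>lebesgue)
     = c * (\<integral>\<^sup>+x. ennreal (f x) * (u x * indicator {-pi<..<pi} x) \<partial>lebesgue)"
    by (subst nn_integral_cmult[symmetric, OF m]) (simp add: ac_simps)
  moreover have "(\<integral>\<^sup>+x. ennreal (a x) * (c * u x) \<partial>count_space UNIV)
     = c * (\<integral>\<^sup>+x. ennreal (a x) * u x \<partial>count_space UNIV)"
    by (subst nn_integral_cmult[symmetric]) (simp_all add: ac_simps)
  ultimately show ?case using mult.IH by (simp add: distrib_left)
next
  case (add u v)
  have "(\<lambda>x. ennreal (f x) * (w x * indicator {-pi<..<pi} x)) \<in> borel_measurable lebesgue"
    if "w \<in> borel_measurable (disc_ac_measure f a)" for w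
    using f borel_measurable_lebesgue_restrict[OF that] by measurable
  then have "(\<integral>\<^sup>+x. ennreal (f x) * ((v x + u x) * indicator {-pi<..<pi} x) \<partial>lebesgue)
     = (\<integral>\<^sup>+x. ennreal (f x) * (v x * indicator {-pi<..<pi} x) \<partial>lebesgue)
       + (\<integral>\<^sup>+x. ennreal (f x) * (u x * indicator {-pi<..<pi} x) \<partial>lebesgue)"
    using add by (subst nn_integral_add[symmetric]) (auto simp: distrib_left distrib_right)
  moreover have "(\<integral>\<^sup>+x. ennreal (a x) * (v x + u x) \<partial>count_space UNIV)
     = (\<integral>\<^sup>+x. ennreal (a x) * v x \<partial>count_space UNIV) + (\<integral>\<^sup>+x. ennreal (a x) * u x \<partial>count_space UNIV)"
    by (subst nn_integral_add[symmetric]) (auto simp: distrib_left)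
  ultimately show ?case using add by (simp add: nn_integral_add ac_simps)
next
  case (seq U)
  have m: "(\<lambda>x. ennreal (f x) * (U i x * indicator {-pi<..<pi} x)) \<in> borel_measurable lebesgue" for i
    using f borel_measurable_lebesgue_restrict[OF seq(1)] by measurable
  have inc1: "incseq (\<lambda>i x. ennreal (f x) * (U i x * indicator {-pi<..<pi} x))"
    using \<open>incseq U\<close> by (auto simp: incseq_def le_fun_def intro!: mult_left_mono mult_right_mono)
  have inc2: "incseq (\<lambda>i x. ennreal (a x) * U i x)"
    using \<open>incseq U\<close> by (auto simp: incseq_def le_fun_def intro!: mult_left_mono)
  have "(\<integral>\<^sup>+x. (SUP i. U i) x \<partial>disc_ac_measure f a) = (SUP i. \<integral>\<^sup>+x. U i x \<partial>disc_ac_measure f a)"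
    unfolding SUP_apply by (rule nn_integral_monotone_convergence_SUP[OF \<open>incseq U\<close> seq(1)])
  also have "\<dots> = (SUP i. (\<integral>\<^sup>+x. ennreal (f x) * (U i x * indicator {-pi<..<pi} x) \<partial>lebesgue)
      + (\<integral>\<^sup>+x. ennreal (a x) * U i x \<partial>count_space UNIV))"
    using seq.IH by simp
  also have "\<dots> = (SUP i. \<integral>\<^sup>+x. ennreal (f x) * (U i x * indicator {-pi<..<pi} x) \<partial>lebesgue)
      + (SUP i. \<integral>\<^sup>+x. ennreal (a x) * U i x \<partial>count_space UNIV)"
    using inc1 inc2 by (intro ennreal_SUP_add) (auto simp: incseq_def le_fun_def intro!: nn_integral_mono)
  also have "\<dots> = (\<integral>\<^sup>+x. (SUP i. ennreal (f x) * (U i x * indicator {-pi<..<pi} x)) \<partial>lebesgue)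
      + (\<integral>\<^sup>+x. (SUP i. ennreal (a x) * U i x) \<partial>count_space UNIV)"
    using inc1 inc2 m by (simp add: nn_integral_monotone_convergence_SUP)
  finally show ?case
    by (simp add: SUP_mult_left_ennreal SUP_mult_right_ennreal image_comp)
qed

lemma disc_ac_measure_cong_AE:
  assumes "AE x in lebesgue. x \<in> {-pi<..<pi} \<longrightarrow> f x = g x"
  shows "disc_ac_measure f a = disc_ac_measure g a"
  unfolding disc_ac_measure_def
proof (rule measure_of_eq)
  show sub: "sets (restrict_space borel {-pi<..<pi}) \<subseteq> Pow {-pi<..<pi}"
    using sets.space_closed[of "restrict_space borel {-pi<..<pi}"] by simp
  fix A assume "A \<in> sigma_sets {-pi<..<pi} (sets (restrict_space borel {-pi<..<pi}))"
  then have A: "A \<subseteq> {-pi<..<pi}" using sigma_sets_into_sp[OF sub] by blast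
  have "AE x in lebesgue. ennreal (f x) * indicator A x = ennreal (g x) * indicator A x"
    using assms by eventually_elim (use A in \<open>auto simp: indicator_def\<close>)
  then show "(\<integral>\<^sup>+x. ennreal (f x) * indicator A x \<partial>lebesgue)
      + (\<integral>\<^sup>+x. ennreal (a x) * indicator A x \<partial>count_space UNIV)
    = (\<integral>\<^sup>+x. ennreal (g x) * indicator A x \<partial>lebesgue)
      + (\<integral>\<^sup>+x. ennreal (a x) * indicator A x \<partial>count_space UNIV)"
    by (simp cong: nn_integral_cong_AE)
qed

definition disc_ac_integral :: "(real \<Rightarrow> real) \<Rightarrow> (real \<Rightarrow> real) \<Rightarrow> (real \<Rightarrow> real) \<Rightarrow> real" where
  "disc_ac_integral h c k = (\<integral>y. h y * k y \<partial>lebesgue) + (\<integral>y. c y * k y \<partial>count_space UNIV)"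

lemma integral_disc_ac_measure:
  assumes f: "\<And>x. 0 \<le> f x" "integrable lebesgue (\<lambda>x. indicator {-pi..pi} x * f x)"
    and a: "\<And>x. 0 \<le> a x" "\<And>x. x \<notin> {-pi<..<pi} \<Longrightarrow> a x = 0" "integrable (count_space UNIV) a"
    and g: "continuous_on UNIV g" "\<And>x. x \<in> {-pi..pi} \<Longrightarrow> 0 \<le> g x"
  shows "(\<integral>x. g x \<partial>disc_ac_measure f a) = disc_ac_integral (\<lambda>x. indicator {-pi..pi} x * f x) a g"
proof -
  define h where "h = (\<lambda>x. indicator {-pi..pi} x * f x)"
  have h: "h \<in> borel_measurable lebesgue" "\<And>x. 0 \<le> h x" "\<And>x. x \<notin> {-pi..pi} \<Longrightarrow> h x = 0"
    using f borel_measurable_integrable[OF f(2)] by (simp_all add: h_def)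
  have hg: "0 \<le> h x * g x" "0 \<le> a x * g x" for x
    using h(2,3)[of x] a(1,2)[of x] g(2)[of x] by (cases "x \<in> {-pi..pi}"; force)+
  have "disc_ac_measure f a = disc_ac_measure h a"
    by (rule disc_ac_measure_cong_AE) (simp add: h_def)
  moreover have g_meas: "g \<in> borel_measurable (disc_ac_measure h a)"
    using measurable_restrict_space1[OF borel_measurable_continuous_onI[OF g(1)]]
    by (simp add: measurable_cong_sets[OF sets_disc_ac_measure refl])
  \<comment> \<open>\<open>h\<close> may be nonzero at \<open>\<plusminus>pi\<close>, which the measure does not see; these points are null.\<close>
  moreover have "AE x in lebesgue. x \<noteq> -pi \<and> x \<noteq> pi"
    using AE_lborel_singleton[of "-pi"] AE_lborel_singleton[of pi] by (intro AE_completion) auto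
  then have "(\<integral>\<^sup>+x. ennreal (h x) * (ennreal (g x) * indicator {-pi<..<pi} x) \<partial>lebesgue)
      = (\<integral>\<^sup>+x. ennreal (h x * g x) \<partial>lebesgue)"
    by (rule nn_integral_cong_AE[OF eventually_mono])
      (use h(2,3) g(2) in \<open>auto simp: indicator_def ennreal_mult\<close>)
  moreover have "(\<integral>\<^sup>+x. ennreal (a x) * ennreal (g x) \<partial>count_space UNIV)
      = (\<integral>\<^sup>+x. ennreal (a x * g x) \<partial>count_space UNIV)"
    using a(1) by (intro nn_integral_cong) (simp add: ennreal_mult')
  moreover have "integrable lebesgue (\<lambda>x. h x * g x)"
    using f(2) h(3) g(1) unfolding h_def[symmetric]
    by (intro integrable_mult_continuous measurable_completion continuous_on_subset[OF g(1)])
      (auto intro: borel_measurable_continuous_onI)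
  moreover have "integrable (count_space UNIV) (\<lambda>x. a x * g x)"
    using a(3) a(2) g(1) by (intro integrable_mult_continuous continuous_on_subset[OF g(1)]) auto
  moreover have "(\<integral>\<^sup>+x. ennreal (g x) \<partial>disc_ac_measure h a)
      = (\<integral>\<^sup>+x. ennreal (h x) * (ennreal (g x) * indicator {-pi<..<pi} x) \<partial>lebesgue)
        + (\<integral>\<^sup>+x. ennreal (a x) * ennreal (g x) \<partial>count_space UNIV)"
    by (rule nn_integral_disc_ac_measure[OF h(1) a(2)]) (use g_meas in measurable)
  ultimately have "(\<integral>\<^sup>+x. ennreal (g x) \<partial>disc_ac_measure f a)
      = ennreal (\<integral>x. h x * g x \<partial>lebesgue) + ennreal (\<integral>x. a x * g x \<partial>count_space UNIV)"
    using hg by (simp add: nn_integral_eq_integral)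
  moreover have "(\<integral>x. g x \<partial>disc_ac_measure f a) = enn2real (\<integral>\<^sup>+x. ennreal (g x) \<partial>disc_ac_measure f a)"
    using g_meas g(2) \<open>disc_ac_measure f a = disc_ac_measure h a\<close>
    by (intro integral_eq_nn_integral) auto
  ultimately show ?thesis
    using hg by (simp add: disc_ac_integral_def h_def integral_nonneg flip: ennreal_plus)
qed

lemma disc_ac_integral_le_polar:
  assumes b: "b \<in> {-pi<..<0} \<union> {0<..<pi}"
    and h: "integrable lebesgue h" "\<And>x. 0 \<le> h x" "\<And>x. x \<notin> {-pi..pi} \<Longrightarrow> h x = 0"
    and c: "integrable (count_space UNIV) c" "\<And>x. 0 \<le> c x" "\<And>x. x \<notin> {-pi..pi} \<Longrightarrow> c x = 0"
    and k: "continuous_on UNIV k" "continuous_on UNIV kH" "polar_dominated b k kH"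
  shows "disc_ac_integral h c k \<le> disc_ac_integral (polar b h) (polar b c) kH"
proof -
  interpret L: reflection_invariant lebesgue b by (rule reflection_invariant_lebesgue)
  interpret C: reflection_invariant "count_space UNIV" b by (rule reflection_invariant_count_space)
  show ?thesis
    unfolding disc_ac_integral_def
    using L.integral_mult_le_polar[OF b h k] C.integral_mult_le_polar[OF b c k] by (rule add_mono)
qed

lemma polar_eq_of_disc_ac_integral_eq:
  assumes b: "b \<in> {-pi<..<0} \<union> {0<..<pi}"
    and h: "integrable lebesgue h" "\<And>x. 0 \<le> h x" "\<And>x. x \<notin> {-pi..pi} \<Longrightarrow> h x = 0"
    and c: "integrable (count_space UNIV) c" "\<And>x. 0 \<le> c x" "\<And>x. x \<notin> {-pi..pi} \<Longrightarrow> c x = 0"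
    and k: "continuous_on UNIV k"
      "\<And>y. y \<in> {-pi..pi} \<Longrightarrow> 2*b - y \<in> {-pi..pi} \<Longrightarrow> b * (y - b) < 0 \<Longrightarrow> k (2*b - y) < k y"
    and eq: "disc_ac_integral h c k = disc_ac_integral (polar b h) (polar b c) k"
  shows "(AE y in lebesgue. polar b h y = h y) \<and> polar b c = c"
proof -
  interpret L: reflection_invariant lebesgue b by (rule reflection_invariant_lebesgue)
  interpret C: reflection_invariant "count_space UNIV" b by (rule reflection_invariant_count_space)
  have dom: "polar_dominated b k k" using b k(2) by (rule polar_dominated_self_strict)
  have "(\<integral>y. h y * k y \<partial>lebesgue) \<le> (\<integral>y. polar b h y * k y \<partial>lebesgue)"
    using b h k(1) k(1) dom by (rule L.integral_mult_le_polar)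
  moreover have "(\<integral>y. c y * k y \<partial>count_space UNIV) \<le> (\<integral>y. polar b c y * k y \<partial>count_space UNIV)"
    using b c k(1) k(1) dom by (rule C.integral_mult_le_polar)
  ultimately have "(\<integral>y. h y * k y \<partial>lebesgue) = (\<integral>y. polar b h y * k y \<partial>lebesgue)"
    and "(\<integral>y. c y * k y \<partial>count_space UNIV) = (\<integral>y. polar b c y * k y \<partial>count_space UNIV)"
    using eq unfolding disc_ac_integral_def by linarith+
  then have "AE y in lebesgue. polar b h y = h y" "AE y in count_space UNIV. polar b c y = c y"
    using b h c k by (auto intro: L.AE_polar_eq_of_integral_eq C.AE_polar_eq_of_integral_eq)
  then show ?thesis by (auto simp: AE_count_space)
qed

lemma disc_ac_integral_add:
  assumes h: "integrable lebesgue h" "\<And>x. x \<notin> {-pi..pi} \<Longrightarrow> h x = 0"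
    and c: "integrable (count_space UNIV) c" "\<And>x. x \<notin> {-pi..pi} \<Longrightarrow> c x = 0"
    and k: "continuous_on UNIV k1" "continuous_on UNIV k2"
  shows "disc_ac_integral h c k1 + disc_ac_integral h c k2 = disc_ac_integral h c (\<lambda>y. k1 y + k2 y)"
proof -
  have "integrable lebesgue (\<lambda>y. h y * k y)" "integrable (count_space UNIV) (\<lambda>y. c y * k y)"
    if "continuous_on UNIV k" for k
    using h c that
    by (auto intro!: integrable_mult_continuous measurable_completion borel_measurable_continuous_onI
        intro: continuous_on_subset)
  then show ?thesis
    unfolding disc_ac_integral_def distrib_left using k by simp
qed

section \<open>Potentials of the polarized measure\<close>

lemma convex_mono_add_le:
  fixes \<phi> :: "real \<Rightarrow> real"
  assumes conv: "convex_on UNIV \<phi>" and mono: "mono \<phi>"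
    and le: "B \<le> BH" "A \<le> BH" "A + B \<le> AH + BH"
  shows "\<phi> A + \<phi> B \<le> \<phi> AH + \<phi> BH"
proof -
  define s where "s = A + B - BH"
  have s: "s \<le> A" "s \<le> B" "s \<le> AH" using le by (auto simp: s_def)
  have chord: "\<phi> c \<le> (\<phi> BH - \<phi> s) / (BH - s) * (c - s) + \<phi> s" if "c \<in> {s..BH}" for c
    using convex_on_subset[OF conv, of "{s..BH}"] that by (intro convex_onD_Icc') auto
  have "\<phi> A + \<phi> B \<le> (\<phi> BH - \<phi> s) / (BH - s) * ((A - s) + (B - s)) + 2 * \<phi> s"
    using chord[of A] chord[of B] s le
      distrib_left[of "(\<phi> BH - \<phi> s) / (BH - s)" "A - s" "B - s"] by fastforce
  also have "(A - s) + (B - s) = BH - s" by (simp add: s_def)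
  also have "(\<phi> BH - \<phi> s) / (BH - s) * (BH - s) = \<phi> BH - \<phi> s"
    by (cases "BH = s") simp_all
  also have "\<phi> s \<le> \<phi> AH" using mono s(3) by (rule monoD)
  finally show ?thesis by simp
qed

locale polarization_setting =
  fixes f a :: "real \<Rightarrow> real" and b :: real
  assumes f_nonneg: "\<And>x. 0 \<le> f x" and f_int: "f integrable_on {-pi..pi}"
    and a_nonneg: "\<And>x. 0 \<le> a x" and a_supp: "\<And>x. x \<notin> {-pi<..<pi} \<Longrightarrow> a x = 0"
    and a_summable: "a summable_on UNIV"
    and b: "b \<in> {-pi<..<0} \<union> {0<..<pi}"
begin

definition dens :: "real \<Rightarrow> real" where
  "dens x = indicator {-pi..pi} x * f x"

lemma dens_nonneg: "0 \<le> dens x"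
  using f_nonneg by (simp add: dens_def)

lemma dens_eq_0: "x \<notin> {-pi..pi} \<Longrightarrow> dens x = 0"
  by (simp add: dens_def)

lemma integrable_dens: "integrable lebesgue dens"
proof -
  have "f absolutely_integrable_on {-pi..pi}"
    using f_int f_nonneg by (intro nonnegative_absolutely_integrable_1) auto
  then show ?thesis by (simp add: dens_def[abs_def] set_integrable_def)
qed

lemma a_eq_0: "x \<notin> {-pi..pi} \<Longrightarrow> a x = 0"
  using a_supp by auto

lemma integrable_a: "integrable (count_space UNIV) a"
proof -
  have "(\<lambda>x. norm (a x)) summable_on UNIV" using a_summable a_nonneg by simp
  then show ?thesis using abs_summable_equivalent abs_summable_on_def by blast
qed

lemma u_meas_eq: "x \<in> {-pi..pi} \<Longrightarrow> u_meas (disc_ac_measure f a) x = disc_ac_integral dens a (Gk x)"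
  unfolding u_meas_def dens_def[abs_def]
  using f_nonneg integrable_dens a_nonneg a_supp integrable_a continuous_on_Gk Gk_nonneg
  by (intro integral_disc_ac_measure) (auto simp: dens_def[abs_def])

lemma polar_a_eq_0: "x \<notin> {-pi<..<pi} \<Longrightarrow> polar b a x = 0"
  by (rule polar_eq_0[OF b order.refl]) (use a_nonneg a_supp in auto)

lemma polar_dens_eq_0: "x \<notin> {-pi..pi} \<Longrightarrow> polar b dens x = 0"
  by (rule polar_eq_0[of b "{-pi..pi}"]) (use b dens_nonneg dens_eq_0 in auto)

lemma polar_dens: "polar b dens = (\<lambda>x. indicator {-pi..pi} x * polar b f x)"
  unfolding dens_def[abs_def] using b f_nonneg by (rule polar_indicator)

lemma integrable_polar_dens: "integrable lebesgue (polar b dens)"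
  using b integrable_dens dens_nonneg dens_eq_0
  by (rule reflection_invariant.integrable_polar[OF reflection_invariant_lebesgue])

lemma integrable_polar_a: "integrable (count_space UNIV) (polar b a)"
  using b integrable_a a_nonneg a_eq_0
  by (rule reflection_invariant.integrable_polar[OF reflection_invariant_count_space])

lemma u_meas_polar_eq:
  assumes x: "x \<in> {-pi..pi}"
  shows "u_meas (disc_ac_measure (polar b f) (polar b a)) x
    = disc_ac_integral (polar b dens) (polar b a) (Gk x)"
  using integrable_polar_dens integrable_polar_a unfolding u_meas_def polar_dens
  using polar_nonneg[of f b] polar_nonneg[of a b] f_nonneg a_nonneg polar_a_eq_0
    continuous_on_Gk Gk_nonneg[OF x]
  by (intro integral_disc_ac_measure) auto

lemma u_meas_le_polar:
  assumes x: "x \<in> {-pi..pi}" "b * (x - b) \<le> 0"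
  shows "u_meas (disc_ac_measure f a) x \<le> u_meas (disc_ac_measure (polar b f) (polar b a)) x"
  unfolding u_meas_eq[OF x(1)] u_meas_polar_eq[OF x(1)]
  using b integrable_dens dens_nonneg dens_eq_0 integrable_a a_nonneg a_eq_0 continuous_on_Gk
    continuous_on_Gk polar_dominated_Gk_near[OF b x]
  by (rule disc_ac_integral_le_polar)

lemma u_meas_le_polar_reflect:
  assumes x: "x \<in> {-pi..pi}" "0 \<le> b * (x - b)"
  shows "u_meas (disc_ac_measure f a) x \<le> u_meas (disc_ac_measure (polar b f) (polar b a)) (2*b - x)"
proof -
  have "2*b - x \<in> {-pi..pi}" using b x by (auto simp: zero_le_mult_iff)
  show ?thesis
    unfolding u_meas_eq[OF x(1)] u_meas_polar_eq[OF \<open>2*b - x \<in> {-pi..pi}\<close>]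
    using b integrable_dens dens_nonneg dens_eq_0 integrable_a a_nonneg a_eq_0 continuous_on_Gk
      continuous_on_Gk polar_dominated_Gk_far[OF b x]
    by (rule disc_ac_integral_le_polar)
qed

lemma u_meas_add_le_polar:
  assumes x: "x \<in> {-pi..pi}" "0 \<le> b * (x - b)"
  shows "u_meas (disc_ac_measure f a) x + u_meas (disc_ac_measure f a) (2*b - x)
    \<le> u_meas (disc_ac_measure (polar b f) (polar b a)) x
      + u_meas (disc_ac_measure (polar b f) (polar b a)) (2*b - x)"
proof -
  have x': "2*b - x \<in> {-pi..pi}" using b x by (auto simp: zero_le_mult_iff)
  have "disc_ac_integral dens a (\<lambda>y. Gk x y + Gk (2*b - x) y)
      \<le> disc_ac_integral (polar b dens) (polar b a) (\<lambda>y. Gk x y + Gk (2*b - x) y)"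
    using b integrable_dens dens_nonneg dens_eq_0 integrable_a a_nonneg a_eq_0
      continuous_on_add[OF continuous_on_Gk continuous_on_Gk]
      continuous_on_add[OF continuous_on_Gk continuous_on_Gk] polar_dominated_Gk_sum_far[OF x(2)]
    by (rule disc_ac_integral_le_polar)
  moreover have "disc_ac_integral dens a (Gk x) + disc_ac_integral dens a (Gk (2*b - x))
      = disc_ac_integral dens a (\<lambda>y. Gk x y + Gk (2*b - x) y)"
    using integrable_dens dens_eq_0 integrable_a a_eq_0 continuous_on_Gk continuous_on_Gk
    by (rule disc_ac_integral_add)
  moreover have "disc_ac_integral (polar b dens) (polar b a) (Gk x)
      + disc_ac_integral (polar b dens) (polar b a) (Gk (2*b - x))
      = disc_ac_integral (polar b dens) (polar b a) (\<lambda>y. Gk x y + Gk (2*b - x) y)"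
    using integrable_polar_dens polar_dens_eq_0 integrable_polar_a polar_a_eq_0 continuous_on_Gk
      continuous_on_Gk
    by (intro disc_ac_integral_add) auto
  ultimately show ?thesis
    by (simp add: u_meas_eq[OF x(1)] u_meas_eq[OF x'] u_meas_polar_eq[OF x(1)] u_meas_polar_eq[OF x'])
qed

lemma convex_u_meas_add_le_polar:
  assumes conv: "convex_on UNIV \<phi>" and mono: "mono \<phi>"
    and x: "x \<in> {-pi..pi}" "0 \<le> b * (x - b)"
  shows "\<phi> (u_meas (disc_ac_measure f a) x) + \<phi> (u_meas (disc_ac_measure f a) (2*b - x))
    \<le> \<phi> (u_meas (disc_ac_measure (polar b f) (polar b a)) x)
      + \<phi> (u_meas (disc_ac_measure (polar b f) (polar b a)) (2*b - x))"
proof (rule convex_mono_add_le[OF conv mono])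
  have "2*b - x \<in> {-pi..pi}" "b * ((2*b - x) - b) \<le> 0"
    using b x by (auto simp: zero_le_mult_iff algebra_simps)
  then show "u_meas (disc_ac_measure f a) (2*b - x)
      \<le> u_meas (disc_ac_measure (polar b f) (polar b a)) (2*b - x)"
    by (rule u_meas_le_polar)
qed (use u_meas_le_polar_reflect[OF x] u_meas_add_le_polar[OF x] in auto)

lemma disc_ac_measure_eq_polar:
  assumes x: "x \<in> {-pi<..<pi}" "b * (x - b) \<le> 0"
    and eq: "u_meas (disc_ac_measure f a) x = u_meas (disc_ac_measure (polar b f) (polar b a)) x"
  shows "disc_ac_measure f a = disc_ac_measure (polar b f) (polar b a)"
proof -
  have xS: "x \<in> {-pi..pi}" using x by auto
  have "disc_ac_integral dens a (Gk x) = disc_ac_integral (polar b dens) (polar b a) (Gk x)"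
    using eq by (simp add: u_meas_eq[OF xS] u_meas_polar_eq[OF xS])
  moreover have "Gk x (2*b - y) < Gk x y"
    if "y \<in> {-pi..pi}" "2*b - y \<in> {-pi..pi}" "b * (y - b) < 0" for y
    using b x that(2,3) by (rule Gk_reflect_less)
  ultimately have "(AE y in lebesgue. polar b dens y = dens y) \<and> polar b a = a"
    using b integrable_dens dens_nonneg dens_eq_0 integrable_a a_nonneg a_eq_0 continuous_on_Gk
    by (intro polar_eq_of_disc_ac_integral_eq) auto
  then have "AE y in lebesgue. y \<in> {-pi<..<pi} \<longrightarrow> f y = polar b f y" "polar b a = a"
    by (auto simp: polar_dens dens_def elim!: eventually_mono)
  then show ?thesis by (metis disc_ac_measure_cong_AE)
qed

lemma u_meas_eq_polar_iff:
  assumes "x \<in> {-pi<..<pi}" "b * (x - b) \<le> 0"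
  shows "u_meas (disc_ac_measure f a) x = u_meas (disc_ac_measure (polar b f) (polar b a)) x
    \<longleftrightarrow> disc_ac_measure f a = disc_ac_measure (polar b f) (polar b a)"
  using disc_ac_measure_eq_polar[OF assms] by auto

lemma
  shows far_side: "(if 0 < b then {b..pi} else {-pi..b}) = {x \<in> {-pi..pi}. 0 \<le> b * (x - b)}"
    and near_side: "(if 0 < b then {-pi..b} else {b..pi}) = {x \<in> {-pi..pi}. b * (x - b) \<le> 0}"
    and near_side_open:
      "(if 0 < b then {-pi<..b} else {b..<pi}) = {x \<in> {-pi<..<pi}. b * (x - b) \<le> 0}"
  using b by (auto simp: zero_le_mult_iff mult_le_0_iff)

end

theorem proposition4p5:
  fixes f a :: "real \<Rightarrow> real" and b :: real and \<phi> :: "real \<Rightarrow> real"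
  assumes f_nonneg: "\<And>x. 0 \<le> f x"
      and f_int: "f integrable_on {-pi..pi}"
      and a_nonneg: "\<And>x. 0 \<le> a x"
      and a_supp: "\<And>x. x \<notin> {-pi<..<pi} \<Longrightarrow> a x = 0"
      and a_summable: "a summable_on UNIV"
      and nonzero: "emeasure (disc_ac_measure f a) {-pi<..<pi} \<noteq> 0"
      and b: "b \<in> {-pi<..<0} \<union> {0<..<pi}"
      and conv: "convex_on UNIV \<phi>"
      and incr: "mono \<phi>"
  shows
    "(\<forall>x \<in> (if 0 < b then {b..pi} else {-pi..b}).
        \<phi> (u_meas (disc_ac_measure f a) x) + \<phi> (u_meas (disc_ac_measure f a) (2 * b - x))
        \<le> \<phi> (u_meas (disc_ac_measure (polar b f) (polar b a)) x)
          + \<phi> (u_meas (disc_ac_measure (polar b f) (polar b a)) (2 * b - x)))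
   \<and> (\<forall>x \<in> (if 0 < b then {-pi..b} else {b..pi}).
        \<phi> (u_meas (disc_ac_measure f a) x)
        \<le> \<phi> (u_meas (disc_ac_measure (polar b f) (polar b a)) x))
   \<and> (strict_mono \<phi> \<longrightarrow>
        ((\<exists>x \<in> (if 0 < b then {-pi<..b} else {b..<pi}).
            \<phi> (u_meas (disc_ac_measure f a) x)
            = \<phi> (u_meas (disc_ac_measure (polar b f) (polar b a)) x))
         \<longleftrightarrow> (\<forall>x \<in> (if 0 < b then {-pi<..b} else {b..<pi}).
            \<phi> (u_meas (disc_ac_measure f a) x)
            = \<phi> (u_meas (disc_ac_measure (polar b f) (polar b a)) x)))
      \<and> ((\<forall>x \<in> (if 0 < b then {-pi<..b} else {b..<pi}).
            \<phi> (u_meas (disc_ac_measure f a) x)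
            = \<phi> (u_meas (disc_ac_measure (polar b f) (polar b a)) x))
         \<longleftrightarrow> disc_ac_measure f a = disc_ac_measure (polar b f) (polar b a)))"
proof -
  interpret polarization_setting f a b
    using f_nonneg f_int a_nonneg a_supp a_summable b by unfold_locales
  let ?\<mu> = "disc_ac_measure f a" and ?\<mu>H = "disc_ac_measure (polar b f) (polar b a)"
  let ?C = "{x \<in> {-pi<..<pi}. b * (x - b) \<le> 0}"
  have "\<phi> (u_meas ?\<mu> x) \<le> \<phi> (u_meas ?\<mu>H x)" if "x \<in> {-pi..pi}" "b * (x - b) \<le> 0" for x
    using incr u_meas_le_polar[OF that] by (rule monoD)
  moreover have "(\<forall>x \<in> ?C. \<phi> (u_meas ?\<mu> x) = \<phi> (u_meas ?\<mu>H x)) \<longleftrightarrow> ?\<mu> = ?\<mu>H"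
    "(\<exists>x \<in> ?C. \<phi> (u_meas ?\<mu> x) = \<phi> (u_meas ?\<mu>H x)) \<longleftrightarrow> ?\<mu> = ?\<mu>H"
    if "strict_mono \<phi>"
  proof -
    have "b \<in> ?C" using b by auto
    then show "(\<forall>x \<in> ?C. \<phi> (u_meas ?\<mu> x) = \<phi> (u_meas ?\<mu>H x)) \<longleftrightarrow> ?\<mu> = ?\<mu>H"
      "(\<exists>x \<in> ?C. \<phi> (u_meas ?\<mu> x) = \<phi> (u_meas ?\<mu>H x)) \<longleftrightarrow> ?\<mu> = ?\<mu>H"
      unfolding strict_mono_eq[OF that] using u_meas_eq_polar_iff by blast+
  qed
  ultimately show ?thesis
    unfolding far_side near_side near_side_open using convex_u_meas_add_le_polar[OF conv incr] by auto
qed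

end
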